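(* Let $q=p^m$ with $p$ an odd prime, $m\ge1$, and $q\equiv 5\pmod 6$. For $b\in\mathbb{F}_{q^2}$ let $\delta(b)=\#\{u\in\mathbb{F}_{q^2}:\ 2u^{q+1}+u^2=b\}$. Then there are exactly $q-1$ elements $b\in\mathbb{F}_{q^2}^*$ with $\delta(b)=2$.
   Context: $\delta(b)$ equals $\delta_f(1,b+\tfrac14)$ for $f(x)=x^{q+2}$, where $\delta_f(a,b)=\#\{x\in\mathbb{F}_{q^2}: f(x+a)-f(x)=b\}$. *)

theory Defs
  imports "HOL-Computational_Algebra.Primes"
begin

text \<open>The finite field F_{q^2} is modelled as an arbitrary finite field type 'a
with CARD('a) = q^2; such a field is unique up to isomorphism.\<close>

definition delta :: "nat \<Rightarrow> 'a::{finite,field} \<Rightarrow> nat" where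
  "delta q b = card {u::'a. 2 * u ^ (q + 1) + u ^ 2 = b}"

end

(*
  Write conj u = u^q for the Frobenius of F_{q^2} over F_q and phi u = u^2 + 2 u conj u, so that
  delta q b is the size of the fibre of phi over b. In the coordinates re u = u + conj u (fixed by
  conj) and im u = u - conj u (negated by conj) one has 4 phi u = 3 re^2 - im^2 + 2 re im, so
  phi u = phi v iff the invariants re * im and 3 re^2 - im^2 agree. As q = 2 mod 3 there is an r
  with r^2 = -3 and conj r = -r, and (re, im) -> (im / r, re * r) preserves both invariants. This
  gives a third point in the fibre of phi u unless u is critical, i.e. u^2 + u conj u + conj u^2 = 0,
  equivalently 3 re^2 + im^2 = 0; for critical u /= 0 the fibre is exactly {u, -u}. Hence the b /= 0
  with delta q b = 2 are the images of the critical points. These are the u for which u^(q-1) is a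
  primitive cube root of unity, 3(q-1) - (q-1) = 2(q-1) of them, paired by u -> -u.
*)

theory Submission
  imports Defs "HOL-Computational_Algebra.Polynomial"
begin

lemma card_roots_of_unity_le:
  assumes "d > 0"
  shows "card {x::'a::idom. x ^ d = 1} \<le> d"
proof -
  let ?p = "monom (1::'a) d - 1"
  have coeff: "coeff ?p d = 1"
    using assms by (simp add: coeff_monom)
  have "?p \<noteq> 0"
  proof
    assume "?p = 0"
    with coeff show False
      by simp
  qed
  have "degree ?p = d"
    using coeff by (intro antisym le_degree degree_diff_le) (simp_all add: degree_monom_le)
  moreover have "{x. x ^ d = 1} = {x. poly ?p x = 0}"
    by (simp add: poly_monom)
  ultimately show ?thesis
    using card_poly_roots_bound[OF \<open>?p \<noteq> 0\<close>] by simp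
qed

lemma power_card_minus_one_eq_one:
  fixes x :: "'a::{finite,field}"
  assumes "x \<noteq> 0"
  shows "x ^ (card (UNIV :: 'a set) - 1) = 1"
proof -
  let ?U = "UNIV - {0::'a}"
  have "(\<Prod>y\<in>?U. y) = (\<Prod>y\<in>?U. x * y)"
    using assms by (intro prod.reindex_bij_witness[of _ "\<lambda>y. x * y" "\<lambda>y. y / x"]) auto
  also have "\<dots> = x ^ card ?U * (\<Prod>y\<in>?U. y)"
    by (simp add: prod.distrib)
  also have "card ?U = card (UNIV :: 'a set) - 1"
    by (simp add: card_Diff_singleton)
  finally show ?thesis
    by simp
qed

lemma power_card_eq_self:
  fixes x :: "'a::{finite,field}"
  shows "x ^ card (UNIV :: 'a set) = x"
proof -
  obtain n where n: "card (UNIV :: 'a set) = Suc n"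
    using finite_UNIV_card_ge_0[OF finite_UNIV] gr0_implies_Suc by blast
  then show ?thesis
    using power_card_minus_one_eq_one[of x] by (cases "x = 0") simp_all
qed

lemma card_eq_mult_card_image_if_fibres:
  assumes "finite A" and "\<And>y. y \<in> f ` A \<Longrightarrow> card {x \<in> A. f x = y} = k"
  shows "card A = k * card (f ` A)"
proof -
  have "card A = (\<Sum>y\<in>f ` A. card {x \<in> A. f x = y})"
    using sum.group[of A "f ` A" f "\<lambda>_. 1::nat"] assms(1) by simp
  then show ?thesis
    using assms(2) by simp
qed

lemma card_power_fibre_eq_card_roots_of_unity:
  fixes z :: "'a::field"
  assumes "d > 0" and "z \<noteq> 0"
  shows "card {x. x \<noteq> 0 \<and> x ^ d = z ^ d} = card {x::'a. x ^ d = 1}"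
proof -
  have "bij_betw (\<lambda>w. z * w) {x. x ^ d = 1} {x. x \<noteq> 0 \<and> x ^ d = z ^ d}"
    using assms by (intro bij_betw_byWitness[where f' = "\<lambda>x. x / z"])
      (auto simp: power_mult_distrib power_divide power_0_left)
  then show ?thesis
    by (simp add: bij_betw_same_card)
qed

lemma card_roots_of_unity:
  assumes "d dvd card (UNIV :: 'a::{finite,field} set) - 1"
  shows "card {x::'a. x ^ d = 1} = d"
proof -
  obtain e where de: "card (UNIV :: 'a set) - 1 = d * e"
    using assms by blast
  have "card (UNIV :: 'a set) \<ge> 2"
    using card_mono[OF finite_UNIV subset_UNIV, of "{0::'a, 1}"] by simp
  with de have "d * e \<noteq> 0"
    by linarith
  then have "d > 0" and "e > 0"
    by auto
  let ?K = "{x::'a. x ^ d = 1}" and ?pow = "\<lambda>x::'a. x ^ d" and ?U = "{x::'a. x \<noteq> 0}"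
  have "(x ^ d) ^ e = 1" if "x \<noteq> 0" for x :: 'a
    unfolding power_mult[symmetric] de[symmetric] using that by (rule power_card_minus_one_eq_one)
  then have "?pow ` ?U \<subseteq> {y. y ^ e = 1}"
    by auto
  then have "card (?pow ` ?U) \<le> card {y::'a. y ^ e = 1}"
    by (intro card_mono) simp_all
  also have "\<dots> \<le> e"
    using \<open>e > 0\<close> by (rule card_roots_of_unity_le)
  finally have image_le: "card (?pow ` ?U) \<le> e" .
  have "card ?U = card ?K * card (?pow ` ?U)"
    using \<open>d > 0\<close>
    by (intro card_eq_mult_card_image_if_fibres) (auto simp: card_power_fibre_eq_card_roots_of_unity)
  moreover have "card ?U = d * e"
    using de by (simp add: Collect_neg_eq card_Diff_singleton Compl_eq_Diff_UNIV)
  ultimately have "d * e \<le> card ?K * e"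
    using image_le by (metis mult_le_mono2)
  then have "d \<le> card ?K"
    using \<open>e > 0\<close> by simp
  moreover have "card ?K \<le> d"
    using \<open>d > 0\<close> by (rule card_roots_of_unity_le)
  ultimately show ?thesis
    by simp
qed

lemma primitive_cube_root_of_unity_iff:
  fixes w :: "'a::field"
  assumes "(3::'a) \<noteq> 0"
  shows "w\<^sup>2 + w + 1 = 0 \<longleftrightarrow> w ^ 3 = 1 \<and> w \<noteq> 1"
proof -
  have "w ^ 3 - 1 = (w - 1) * (w\<^sup>2 + w + 1)"
    by (simp add: algebra_simps power2_eq_square power3_eq_cube)
  then show ?thesis
    using assms by auto
qed

lemma eq_or_neg_if_same_invariants:
  fixes s t s' t' :: "'a::field"
  assumes "(3::'a) \<noteq> 0" and "s \<noteq> 0" and "3 * s\<^sup>2 + t\<^sup>2 = 0"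
    and "s' * t' = s * t" and "3 * s'\<^sup>2 - t'\<^sup>2 = 3 * s\<^sup>2 - t\<^sup>2"
  shows "s' = s \<and> t' = t \<or> s' = -s \<and> t' = -t"
proof -
  have "3 * (s'\<^sup>2 - s\<^sup>2)\<^sup>2 = s'\<^sup>2 * ((3 * s'\<^sup>2 - t'\<^sup>2) - (3 * s\<^sup>2 - t\<^sup>2))
      + (s' * t' - s * t) * (s' * t' + s * t) - (s'\<^sup>2 - s\<^sup>2) * (3 * s\<^sup>2 + t\<^sup>2)"
    by algebra
  then have "3 * (s'\<^sup>2 - s\<^sup>2)\<^sup>2 = 0"
    using assms(3-5) by simp
  then have "s' = s \<or> s' = -s"
    using assms(1) by (simp add: power2_eq_iff)
  then show ?thesis
  proof
    assume "s' = s"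
    then show ?thesis
      using assms(2,4) by simp
  next
    assume "s' = -s"
    then have "s * (- t') = s * t"
      using assms(4) by simp
    then have "- t' = t"
      by (rule mult_left_cancel[OF assms(2), THEN iffD1])
    then show ?thesis
      using \<open>s' = -s\<close> by auto
  qed
qed

lemma of_nat_card_UNIV_eq_0: "of_nat (card (UNIV :: 'a::{finite,ring_1} set)) = (0::'a)"
proof -
  have "(\<Sum>y\<in>UNIV. y) = (\<Sum>y\<in>UNIV. y + (1::'a))"
    by (rule sum.reindex_bij_witness[of _ "\<lambda>y. y + 1" "\<lambda>y. y - 1"]) auto
  then show ?thesis
    by (simp add: sum.distrib)
qed

lemma CHAR_dvd_card_UNIV: "CHAR('a::{finite,ring_1}) dvd card (UNIV :: 'a set)"
  using of_nat_card_UNIV_eq_0 by (rule of_nat_eq_0_iff_char_dvd[THEN iffD1])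

lemma prime_CHAR_finite_field: "prime CHAR('a::{finite,field})"
  using finite_imp_CHAR_pos[OF finite_UNIV] by (rule prime_CHAR_semidom)

lemma CHAR_eq_if_card_UNIV_eq_power:
  assumes "prime p" and "card (UNIV :: 'a::{finite,field} set) = p ^ k"
  shows "CHAR('a) = p"
proof -
  have "CHAR('a) dvd p ^ k"
    using CHAR_dvd_card_UNIV[where 'a = 'a] assms(2) by simp
  then have "CHAR('a) dvd p"
    using prime_CHAR_finite_field prime_dvd_power by blast
  then show ?thesis
    using prime_CHAR_finite_field assms(1) primes_dvd_imp_eq by blast
qed

locale quadratic_extension =
  fixes q :: nat and conj :: "'a::{finite,field} \<Rightarrow> 'a"
  assumes conj_eq_power: "conj x = x ^ q"
    and card_UNIV: "card (UNIV :: 'a set) = q\<^sup>2"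
    and conj_add [simp]: "conj (x + y) = conj x + conj y"
begin

lemma conj_zero [simp]: "conj 0 = 0"
  using conj_add[of 0 0] by (simp only: add_0 add_cancel_right_right)

lemma conj_minus [simp]: "conj (- x) = - conj x"
  using conj_add[of x "- x"] by (simp add: eq_neg_iff_add_eq_0 add.commute)

lemma conj_diff [simp]: "conj (x - y) = conj x - conj y"
  using conj_add[of x "- y"] by simp

lemma conj_one [simp]: "conj 1 = 1"
  by (simp add: conj_eq_power)

lemma conj_mult [simp]: "conj (x * y) = conj x * conj y"
  by (simp add: conj_eq_power power_mult_distrib)

lemma conj_divide [simp]: "conj (x / y) = conj x / conj y"
  by (simp add: conj_eq_power power_divide)

lemma conj_of_nat [simp]: "conj (of_nat n) = of_nat n"
  by (induction n) simp_all

lemma conj_numeral [simp]: "conj (numeral n) = numeral n"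
  using conj_of_nat[of "numeral n"] by simp

lemma conj_conj [simp]: "conj (conj x) = x"
  using power_card_eq_self[of x] by (simp add: conj_eq_power card_UNIV power2_eq_square flip: power_mult)

lemma CHAR_dvd_q: "CHAR('a) dvd q"
  using CHAR_dvd_card_UNIV[where 'a = 'a] prime_CHAR_finite_field[where 'a = 'a]
  by (simp add: card_UNIV prime_dvd_power)

lemma of_nat_neq_0_if_coprime:
  assumes "coprime k q"
  shows "(of_nat k :: 'a) \<noteq> 0"
proof
  assume "(of_nat k :: 'a) = 0"
  then have "is_unit CHAR('a)"
    using assms CHAR_dvd_q coprime_common_divisor of_nat_eq_0_iff_char_dvd by blast
  then show False
    using prime_CHAR_finite_field[where 'a = 'a] by simp
qed

definition phi :: "'a \<Rightarrow> 'a" where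
  "phi u = u\<^sup>2 + 2 * u * conj u"

definition re :: "'a \<Rightarrow> 'a" where
  "re u = u + conj u"

definition im :: "'a \<Rightarrow> 'a" where
  "im u = u - conj u"

definition critical :: "'a set" where
  "critical = {u. u \<noteq> 0 \<and> u\<^sup>2 + u * conj u + (conj u)\<^sup>2 = 0}"

lemma delta_eq_card_phi_fibre: "delta q b = card {u. phi u = b}"
  by (simp add: delta_def phi_def conj_eq_power algebra_simps)

lemma conj_re [simp]: "conj (re u) = re u"
  by (simp add: re_def add.commute)

lemma re_minus [simp]: "re (- u) = - re u"
  by (simp add: re_def)

lemma conj_im [simp]: "conj (im u) = - im u"
  by (simp add: im_def)

lemma four_phi_eq: "4 * phi u = 3 * (re u)\<^sup>2 - (im u)\<^sup>2 + 2 * re u * im u"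
  by (simp add: phi_def re_def im_def algebra_simps power2_eq_square)

lemma four_conj_phi_eq: "4 * conj (phi u) = 3 * (re u)\<^sup>2 - (im u)\<^sup>2 - 2 * re u * im u"
  by (simp add: phi_def re_def im_def algebra_simps power2_eq_square)

lemma phi_minus [simp]: "phi (- u) = phi u"
  by (simp add: phi_def)

lemma four_critical_eq: "4 * (u\<^sup>2 + u * conj u + (conj u)\<^sup>2) = 3 * (re u)\<^sup>2 + (im u)\<^sup>2"
  by (simp add: re_def im_def algebra_simps power2_eq_square)

end

locale quadratic_extension_5_mod_6 = quadratic_extension +
  assumes q_mod_6: "q mod 6 = 5"
begin

lemma two_neq_zero: "(2::'a) \<noteq> 0"
proof -
  have "odd q"
    using q_mod_6 by presburger
  then show ?thesis
    using of_nat_neq_0_if_coprime[of 2] by simp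
qed

lemma three_neq_zero: "(3::'a) \<noteq> 0"
proof -
  have "\<not> 3 dvd q"
    using q_mod_6 by presburger
  then have "coprime 3 q"
    by (intro prime_imp_coprime) simp_all
  then show ?thesis
    using of_nat_neq_0_if_coprime[of 3] by simp
qed

lemma four_neq_zero: "(4::'a) \<noteq> 0"
  using two_neq_zero by (metis mult_2_right numeral_Bit0 no_zero_divisors)

lemma card_UNIV_minus_one: "card (UNIV :: 'a set) - 1 = (q - 1) * (q + 1)"
  by (cases q) (simp_all add: card_UNIV power2_eq_square)

lemma three_dvd_q_plus_one: "3 dvd q + 1"
  using q_mod_6 by presburger

lemma phi_eq_phi_iff:
  "phi v = phi u \<longleftrightarrow>
    re v * im v = re u * im u \<and> 3 * (re v)\<^sup>2 - (im v)\<^sup>2 = 3 * (re u)\<^sup>2 - (im u)\<^sup>2"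
proof
  assume "phi v = phi u"
  then have "4 * phi v = 4 * phi u" and "4 * conj (phi v) = 4 * conj (phi u)"
    by simp_all
  then have "4 * (re v * im v) = 4 * (re u * im u)"
    and "2 * (3 * (re v)\<^sup>2 - (im v)\<^sup>2) = 2 * (3 * (re u)\<^sup>2 - (im u)\<^sup>2)"
    unfolding four_phi_eq four_conj_phi_eq by algebra+
  then show "re v * im v = re u * im u \<and> 3 * (re v)\<^sup>2 - (im v)\<^sup>2 = 3 * (re u)\<^sup>2 - (im u)\<^sup>2"
    by (simp only: mult_left_cancel[OF four_neq_zero] mult_left_cancel[OF two_neq_zero])
next
  assume "re v * im v = re u * im u \<and> 3 * (re v)\<^sup>2 - (im v)\<^sup>2 = 3 * (re u)\<^sup>2 - (im u)\<^sup>2"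
  then have "4 * phi v = 4 * phi u"
    unfolding four_phi_eq by algebra
  then show "phi v = phi u"
    using four_neq_zero by simp
qed

lemma re_im_half [simp]: "(re u + im u) / 2 = u"
  using two_neq_zero by (simp add: re_def im_def field_simps)

lemma re_im_of_half:
  assumes "conj s = s" and "conj t = - t"
  shows "re ((s + t) / 2) = s" and "im ((s + t) / 2) = t"
  using assms two_neq_zero four_neq_zero by (simp_all add: re_def im_def field_simps)

lemma critical_iff_re_im: "u \<in> critical \<longleftrightarrow> u \<noteq> 0 \<and> 3 * (re u)\<^sup>2 + (im u)\<^sup>2 = 0"
proof -
  have "u\<^sup>2 + u * conj u + (conj u)\<^sup>2 = 0 \<longleftrightarrow> 4 * (u\<^sup>2 + u * conj u + (conj u)\<^sup>2) = 0"
    using four_neq_zero by (simp only: mult_eq_0_iff) simp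
  then show ?thesis
    unfolding critical_def four_critical_eq by simp
qed

lemma phi_eq_phi_critical:
  assumes "u \<in> critical" and "phi v = phi u"
  shows "v = u \<or> v = - u"
proof -
  have u: "u \<noteq> 0" "3 * (re u)\<^sup>2 + (im u)\<^sup>2 = 0"
    using assms(1) critical_iff_re_im by auto
  have "re u \<noteq> 0"
  proof
    assume "re u = 0"
    with u(2) have "im u = 0"
      by simp
    with \<open>re u = 0\<close> u(1) show False
      using re_im_half[of u] by simp
  qed
  with u(2) assms(2) have "re v = re u \<and> im v = im u \<or> re v = - re u \<and> im v = - im u"
    by (intro eq_or_neg_if_same_invariants three_neq_zero) (simp_all add: phi_eq_phi_iff)
  then show ?thesis
    using re_im_half[of v] re_im_half[of u] by (metis minus_add_distrib minus_divide_left)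
qed

lemma fibre_phi_critical: "u \<in> critical \<Longrightarrow> {v. phi v = phi u} = {u, - u}"
  using phi_eq_phi_critical by auto

lemma delta_phi_critical:
  assumes "u \<in> critical"
  shows "delta q (phi u) = 2"
proof -
  have "- u \<noteq> u"
    using assms two_neq_zero by (simp add: critical_def)
  then show ?thesis
    using fibre_phi_critical[OF assms] by (simp add: delta_eq_card_phi_fibre)
qed

lemma exists_sqrt_minus_three_conj_neg: "\<exists>r. r\<^sup>2 = - 3 \<and> conj r = - r"
proof -
  have "3 dvd card (UNIV :: 'a set) - 1"
    unfolding card_UNIV_minus_one using three_dvd_q_plus_one by (rule dvd_mult)
  then have "{z::'a. z ^ 3 = 1} \<noteq> {1}"
    using card_roots_of_unity by force
  then obtain z :: 'a where "z ^ 3 = 1" and "z \<noteq> 1"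
    by auto
  then have z: "z\<^sup>2 + z + 1 = 0"
    using primitive_cube_root_of_unity_iff three_neq_zero by blast
  have "\<exists>k. q = 3 * k + 2"
    using q_mod_6 by presburger
  then have conj_z: "conj z = z\<^sup>2"
    using \<open>z ^ 3 = 1\<close> by (auto simp: conj_eq_power power_add power_mult power2_eq_square)
  show ?thesis
  proof (intro exI conjI)
    show "(2 * z + 1)\<^sup>2 = - 3"
      using z by algebra
    have "conj (2 * z + 1) = 2 * z\<^sup>2 + 1"
      by (simp add: conj_z)
    also have "\<dots> = - (2 * z + 1)"
      using z by algebra
    finally show "conj (2 * z + 1) = - (2 * z + 1)" .
  qed
qed

lemma three_le_delta_phi_if_not_critical:
  assumes "u \<noteq> 0" and "u \<notin> critical"
  shows "3 \<le> delta q (phi u)"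
proof -
  obtain r where r: "r\<^sup>2 = - 3" "conj r = - r"
    using exists_sqrt_minus_three_conj_neg by blast
  then have "r \<noteq> 0"
    using three_neq_zero by auto
  define v where "v = (im u / r + re u * r) / 2"
  have re_v: "re v = im u / r" and im_v: "im v = re u * r"
    unfolding v_def using r(2) by (simp_all add: re_im_of_half)
  have im_sq: "3 * (im u / r)\<^sup>2 = - (im u)\<^sup>2"
    using r(1) three_neq_zero by (simp add: power_divide)
  have re_sq: "(re u * r)\<^sup>2 = - 3 * (re u)\<^sup>2"
    using r(1) by (simp add: power_mult_distrib)
  have "phi v = phi u"
    unfolding phi_eq_phi_iff re_v im_v using \<open>r \<noteq> 0\<close> im_sq re_sq by simp
  have "(re v)\<^sup>2 \<noteq> (re u)\<^sup>2"
  proof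
    assume "(re v)\<^sup>2 = (re u)\<^sup>2"
    then have "3 * (re u)\<^sup>2 + (im u)\<^sup>2 = 0"
      using im_sq re_v by simp
    with assms show False
      using critical_iff_re_im by blast
  qed
  then have "v \<noteq> u" and "v \<noteq> - u"
    by auto
  then have "card {u, - u, v} = 3"
    using assms(1) two_neq_zero by auto
  moreover have "{u, - u, v} \<subseteq> {w. phi w = phi u}"
    using \<open>phi v = phi u\<close> by auto
  ultimately show ?thesis
    unfolding delta_eq_card_phi_fibre by (metis card_mono finite)
qed

lemma critical_iff_power:
  "u \<in> critical \<longleftrightarrow> u ^ (3 * (q - 1)) = 1 \<and> u ^ (q - 1) \<noteq> 1"
proof (cases "u = 0")
  case True
  moreover have "q > 1"
    using q_mod_6 by presburger
  ultimately show ?thesis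
    by (simp add: critical_def power_0_left)
next
  case False
  let ?w = "u ^ (q - 1)"
  have "conj u = ?w * u"
    using q_mod_6 by (simp add: conj_eq_power flip: power_Suc2)
  then have "u\<^sup>2 + u * conj u + (conj u)\<^sup>2 = u\<^sup>2 * (?w\<^sup>2 + ?w + 1)"
    by (simp add: algebra_simps power2_eq_square)
  then have "u \<in> critical \<longleftrightarrow> ?w\<^sup>2 + ?w + 1 = 0"
    using False by (simp add: critical_def)
  also have "\<dots> \<longleftrightarrow> ?w ^ 3 = 1 \<and> ?w \<noteq> 1"
    using three_neq_zero by (rule primitive_cube_root_of_unity_iff)
  finally show ?thesis
    by (simp add: mult.commute flip: power_mult)
qed

lemma card_critical: "card critical = 2 * (q - 1)"
proof -
  have "critical = {u. u ^ (3 * (q - 1)) = 1} - {u. u ^ (q - 1) = 1}"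
    using critical_iff_power by auto
  moreover have "{u::'a. u ^ (q - 1) = 1} \<subseteq> {u. u ^ (3 * (q - 1)) = 1}"
    by (auto simp: power_mult mult.commute[of 3])
  moreover have "3 * (q - 1) dvd card (UNIV :: 'a set) - 1"
    unfolding card_UNIV_minus_one mult.commute[of 3]
    using three_dvd_q_plus_one by (rule mult_dvd_mono[OF dvd_refl])
  then have "card {u::'a. u ^ (3 * (q - 1)) = 1} = 3 * (q - 1)"
    by (rule card_roots_of_unity)
  moreover have "q - 1 dvd card (UNIV :: 'a set) - 1"
    unfolding card_UNIV_minus_one by simp
  then have "card {u::'a. u ^ (q - 1) = 1} = q - 1"
    by (rule card_roots_of_unity)
  ultimately show ?thesis
    by (simp add: card_Diff_subset)
qed

lemma nonzero_delta_eq_two_iff: "{b. b \<noteq> 0 \<and> delta q b = 2} = phi ` critical"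
proof (intro equalityI subsetI)
  fix b :: 'a
  assume b: "b \<in> {b. b \<noteq> 0 \<and> delta q b = 2}"
  have "{u. phi u = b} \<noteq> {}"
  proof
    assume "{u. phi u = b} = {}"
    with b show False
      by (simp add: delta_eq_card_phi_fibre)
  qed
  then obtain u where u: "phi u = b"
    by blast
  then have "u \<noteq> 0"
    using b by (auto simp: phi_def)
  then have "u \<in> critical"
    using three_le_delta_phi_if_not_critical[of u] b u by fastforce
  with u show "b \<in> phi ` critical"
    by blast
next
  fix b
  assume "b \<in> phi ` critical"
  then obtain u where u: "u \<in> critical" "b = phi u"
    by blast
  have "b \<noteq> 0"
  proof
    assume "b = 0"
    then have "phi 0 = phi u"
      using u(2) by (simp add: phi_def)
    then have "0 \<in> {u, - u}"
      using fibre_phi_critical[OF u(1)] by blast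
    with u(1) show False
      by (auto simp: critical_def)
  qed
  then show "b \<in> {b. b \<noteq> 0 \<and> delta q b = 2}"
    using delta_phi_critical u by simp
qed

lemma card_phi_critical: "card (phi ` critical) = q - 1"
proof -
  have "card critical = 2 * card (phi ` critical)"
  proof (rule card_eq_mult_card_image_if_fibres)
    fix b
    assume "b \<in> phi ` critical"
    then obtain u where u: "u \<in> critical" "b = phi u"
      by blast
    then have "{x \<in> critical. phi x = b} = {u, - u}"
      using fibre_phi_critical[OF u(1)] by (auto simp: critical_def)
    moreover have "- u \<noteq> u"
      using u(1) two_neq_zero by (simp add: critical_def)
    ultimately show "card {x \<in> critical. phi x = b} = 2"
      by simp
  qed simp
  then show ?thesis
    using card_critical by simp
qed

end

theorem proposition6:
  fixes p m q :: nat
  assumes "prime p" and "odd p" and "m \<ge> 1" and "q = p ^ m"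
    and "q mod 6 = 5"
    and "card (UNIV :: 'a set) = q ^ 2"
  shows "card {b::'a::{finite,field}. b \<noteq> 0 \<and> delta q b = 2} = q - 1"
proof -
  have "card (UNIV :: 'a set) = p ^ (m * 2)"
    using assms(4,6) by (simp add: power_mult)
  then have "CHAR('a) = p"
    by (rule CHAR_eq_if_card_UNIV_eq_power[OF assms(1)])
  then have "(x + y) ^ q = x ^ q + y ^ q" for x y :: 'a
    using assms(1,4) by (intro freshmans_dream') simp_all
  then interpret quadratic_extension_5_mod_6 q "\<lambda>x::'a. x ^ q"
    using assms(5,6) by unfold_locales simp_all
  show ?thesis
    using nonzero_delta_eq_two_iff card_phi_critical by simp
qed

end
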